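(* Let $\mathcal P$ be a Fitting program over a bilattice $\mathcal B$. Then $Fix^{\mathcal U}_{\mathcal U}\le_k Fix^{\mathcal F}_{\mathcal U}$ and $Fix^{\mathcal U}_{\mathcal U}\le_k Fix^{\mathcal T}_{\mathcal U}$.
   Context: A bilattice $\langle\mathcal B,\le_t,\le_k\rangle$ is a nonempty set with two partial orders, each making $\mathcal B$ a lattice with top and bottom. Under $\le_t$, meet and join are $\wedge,\vee$ (infinitary $\bigwedge,\bigvee$), bottom $\mathcal F$, top $\mathcal T$; under $\le_k$, meet and join are $\otimes,\oplus$ (infinitary $\bigotimes,\bigoplus$), bottom $\mathcal U$, top $\mathcal I$. Standing assumptions: $\mathcal B$ is complete for both orders, infinitely distributive, satisfies the infinitary interlacing conditions, and has a negation $\neg$ (an involution reversing $\le_t$ and preserving $\le_k$). A formula is built from literals ($A$ or $\neg A$) and elements of $\mathcal B$ using $\wedge,\vee,\otimes,\oplus,\exists,\forall$ (with built-in predicate $equal$). A clause is $P(x_1,\dots,x_n)\leftarrow\phi(x_1,\dots,x_n)$ with the body's free variables among $x_1,\dots,x_n$. A Fitting program is a finite set of clauses with no predicate letter heading more than one clause; Inst-$\mathcal P$ is its set of ground instances. $\mathcal V(\mathcal B)$: maps from ground atoms to $\mathcal B$ with pointwise orders/operations. Valuations extend to closed formulas compositionally ($v(\beta)=\beta$, connectives pointwise, $\exists$ as $\bigvee$, $\forall$ as $\bigwedge$ over closed-term instances, $v(equal(s,t))=\mathcal T$ if $s=t$ else $\mathcal F$). The contrajoin $v\bigtriangleup w$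 evaluates likewise but gives $A$ the value $v(A)$ and $\neg A$ the value $\neg w(A)$. For $\alpha\in\{\mathcal F,\mathcal T,\mathcal U,\mathcal I\}$: $\Psi_{\mathcal P}^{\alpha}(v,w)(A)=\alpha$ if $A$ heads no member of Inst-$\mathcal P$, and $=(v\bigtriangleup w)(B)$ if $A\leftarrow B\in$ Inst-$\mathcal P$. $\Psi'^{\alpha}_{\mathcal P}(v)$ is the $\le_t$-least (resp. $\le_t$-greatest, $\le_k$-least, $\le_k$-greatest) fixpoint of $x\mapsto\Psi_{\mathcal P}^{\alpha}(x,v)$ when $\alpha=\mathcal F$ (resp. $\mathcal T,\mathcal U,\mathcal I$), obtained as the limit of the transfinite iteration from the constant valuation $\alpha$. $Fix^{\alpha}_{\mathcal U}$ denotes the $\le_k$-least fixpoint of $\Psi'^{\alpha}_{\mathcal P}$. *)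

theory Defs
  imports Main
begin

text \<open>A bilattice is given by its truth order, knowledge order and negation,
  all on the full type 'b (so the carrier is nonempty).\<close>

record 'b bilat =
  tle :: "'b \<Rightarrow> 'b \<Rightarrow> bool"
  kle :: "'b \<Rightarrow> 'b \<Rightarrow> bool"
  bneg :: "'b \<Rightarrow> 'b"

definition is_lub :: "('b \<Rightarrow> 'b \<Rightarrow> bool) \<Rightarrow> 'b set \<Rightarrow> 'b \<Rightarrow> bool" where
  "is_lub R S x \<longleftrightarrow> (\<forall>a\<in>S. R a x) \<and> (\<forall>y. (\<forall>a\<in>S. R a y) \<longrightarrow> R x y)"

definition is_glb :: "('b \<Rightarrow> 'b \<Rightarrow> bool) \<Rightarrow> 'b set \<Rightarrow> 'b \<Rightarrow> bool" where
  "is_glb R S x \<longleftrightarrow> (\<forall>a\<in>S. R x a) \<and> (\<forall>y. (\<forall>a\<in>S. R y a) \<longrightarrow> R y x)"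

definition lub :: "('b \<Rightarrow> 'b \<Rightarrow> bool) \<Rightarrow> 'b set \<Rightarrow> 'b" where
  "lub R S = (THE x. is_lub R S x)"

definition glb :: "('b \<Rightarrow> 'b \<Rightarrow> bool) \<Rightarrow> 'b set \<Rightarrow> 'b" where
  "glb R S = (THE x. is_glb R S x)"

definition tMeet :: "'b bilat \<Rightarrow> 'b set \<Rightarrow> 'b" where "tMeet B S = glb (tle B) S"
definition tJoin :: "'b bilat \<Rightarrow> 'b set \<Rightarrow> 'b" where "tJoin B S = lub (tle B) S"
definition kMeet :: "'b bilat \<Rightarrow> 'b set \<Rightarrow> 'b" where "kMeet B S = glb (kle B) S"
definition kJoin :: "'b bilat \<Rightarrow> 'b set \<Rightarrow> 'b" where "kJoin B S = lub (kle B) S"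

definition tmeet :: "'b bilat \<Rightarrow> 'b \<Rightarrow> 'b \<Rightarrow> 'b" where "tmeet B a b = tMeet B {a, b}"
definition tjoin :: "'b bilat \<Rightarrow> 'b \<Rightarrow> 'b \<Rightarrow> 'b" where "tjoin B a b = tJoin B {a, b}"
definition kmeet :: "'b bilat \<Rightarrow> 'b \<Rightarrow> 'b \<Rightarrow> 'b" where "kmeet B a b = kMeet B {a, b}"
definition kjoin :: "'b bilat \<Rightarrow> 'b \<Rightarrow> 'b \<Rightarrow> 'b" where "kjoin B a b = kJoin B {a, b}"

definition bF :: "'b bilat \<Rightarrow> 'b" where "bF B = tMeet B UNIV"
definition bT :: "'b bilat \<Rightarrow> 'b" where "bT B = tJoin B UNIV"
definition bU :: "'b bilat \<Rightarrow> 'b" where "bU B = kMeet B UNIV"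
definition bI :: "'b bilat \<Rightarrow> 'b" where "bI B = kJoin B UNIV"

definition partial_order_rel :: "('b \<Rightarrow> 'b \<Rightarrow> bool) \<Rightarrow> bool" where
  "partial_order_rel R \<longleftrightarrow> (\<forall>a. R a a) \<and> (\<forall>a b. R a b \<longrightarrow> R b a \<longrightarrow> a = b)
     \<and> (\<forall>a b c. R a b \<longrightarrow> R b c \<longrightarrow> R a c)"

definition complete_rel :: "('b \<Rightarrow> 'b \<Rightarrow> bool) \<Rightarrow> bool" where
  "complete_rel R \<longleftrightarrow> (\<forall>S. (\<exists>x. is_lub R S x) \<and> (\<exists>x. is_glb R S x))"

definition inf_distributive :: "'b bilat \<Rightarrow> bool" where
  "inf_distributive B \<longleftrightarrow>
     (\<forall>bop \<in> {tmeet B, tjoin B, kmeet B, kjoin B}.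
      \<forall>Op \<in> {tMeet B, tJoin B, kMeet B, kJoin B}.
      \<forall>a S. S \<noteq> {} \<longrightarrow> bop a (Op S) = Op (bop a ` S))"

text \<open>An indexed family of pairs
  (a_i, b_i) is represented by the set of pairs P.\<close>
definition inf_interlaced :: "'b bilat \<Rightarrow> bool" where
  "inf_interlaced B \<longleftrightarrow>
     (\<forall>P :: ('b \<times> 'b) set. (\<forall>(a, b) \<in> P. kle B a b) \<longrightarrow>
         kle B (tMeet B (fst ` P)) (tMeet B (snd ` P)) \<and>
         kle B (tJoin B (fst ` P)) (tJoin B (snd ` P))) \<and>
     (\<forall>P :: ('b \<times> 'b) set. (\<forall>(a, b) \<in> P. tle B a b) \<longrightarrow>
         tle B (kMeet B (fst ` P)) (kMeet B (snd ` P)) \<and>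
         tle B (kJoin B (fst ` P)) (kJoin B (snd ` P)))"

definition is_negation :: "'b bilat \<Rightarrow> bool" where
  "is_negation B \<longleftrightarrow> (\<forall>a. bneg B (bneg B a) = a)
     \<and> (\<forall>a b. tle B a b \<longrightarrow> tle B (bneg B b) (bneg B a))
     \<and> (\<forall>a b. kle B a b \<longrightarrow> kle B (bneg B a) (bneg B b))"

definition bilattice :: "'b bilat \<Rightarrow> bool" where
  "bilattice B \<longleftrightarrow> partial_order_rel (tle B) \<and> partial_order_rel (kle B)
     \<and> complete_rel (tle B) \<and> complete_rel (kle B)
     \<and> inf_distributive B \<and> inf_interlaced B \<and> is_negation B"

datatype ('f, 'v) trm = Var 'v | Fn 'f "('f, 'v) trm list"

datatype 'f gterm = GFn 'f "'f gterm list"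

datatype ('p, 'f, 'v, 'b) fml =
    Pos 'p "('f, 'v) trm list"
  | Neg 'p "('f, 'v) trm list"
  | Equal "('f, 'v) trm" "('f, 'v) trm"
  | NEqual "('f, 'v) trm" "('f, 'v) trm"
  | Cst 'b
  | Conj "('p, 'f, 'v, 'b) fml" "('p, 'f, 'v, 'b) fml"
  | Disj "('p, 'f, 'v, 'b) fml" "('p, 'f, 'v, 'b) fml"
  | KMeet "('p, 'f, 'v, 'b) fml" "('p, 'f, 'v, 'b) fml"
  | KJoin "('p, 'f, 'v, 'b) fml" "('p, 'f, 'v, 'b) fml"
  | Ex 'v "('p, 'f, 'v, 'b) fml"
  | All 'v "('p, 'f, 'v, 'b) fml"

fun tvars :: "('f, 'v) trm \<Rightarrow> 'v set" where
  "tvars (Var x) = {x}"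
| "tvars (Fn f ts) = (\<Union>t\<in>set ts. tvars t)"

fun fv :: "('p, 'f, 'v, 'b) fml \<Rightarrow> 'v set" where
  "fv (Pos p ts) = (\<Union>t\<in>set ts. tvars t)"
| "fv (Neg p ts) = (\<Union>t\<in>set ts. tvars t)"
| "fv (Equal s t) = tvars s \<union> tvars t"
| "fv (NEqual s t) = tvars s \<union> tvars t"
| "fv (Cst b) = {}"
| "fv (Conj a b) = fv a \<union> fv b"
| "fv (Disj a b) = fv a \<union> fv b"
| "fv (KMeet a b) = fv a \<union> fv b"
| "fv (KJoin a b) = fv a \<union> fv b"
| "fv (Ex x a) = fv a - {x}"
| "fv (All x a) = fv a - {x}"

text \<open>A clause P(x1,...,xn) <- phi is represented as (P, [x1,...,xn], phi).\<close>
type_synonym ('p, 'f, 'v, 'b) clause = "'p \<times> 'v list \<times> ('p, 'f, 'v, 'b) fml"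
type_synonym ('p, 'f, 'v, 'b) prog = "('p, 'f, 'v, 'b) clause set"

definition fitting_program :: "('p, 'f, 'v, 'b) prog \<Rightarrow> bool" where
  "fitting_program P \<longleftrightarrow> finite P
     \<and> (\<forall>(p, xs, \<phi>) \<in> P. distinct xs \<and> fv \<phi> \<subseteq> set xs)
     \<and> (\<forall>c1\<in>P. \<forall>c2\<in>P. fst c1 = fst c2 \<longrightarrow> c1 = c2)"

type_synonym ('p, 'f) gatom = "'p \<times> 'f gterm list"
type_synonym ('p, 'f, 'b) valuation = "('p, 'f) gatom \<Rightarrow> 'b"

definition vtle :: "'b bilat \<Rightarrow> ('p, 'f, 'b) valuation \<Rightarrow> ('p, 'f, 'b) valuation \<Rightarrow> bool" where
  "vtle B v w \<longleftrightarrow> (\<forall>A. tle B (v A) (w A))"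

definition vkle :: "'b bilat \<Rightarrow> ('p, 'f, 'b) valuation \<Rightarrow> ('p, 'f, 'b) valuation \<Rightarrow> bool" where
  "vkle B v w \<longleftrightarrow> (\<forall>A. kle B (v A) (w A))"

fun ginst :: "('v \<Rightarrow> 'f gterm) \<Rightarrow> ('f, 'v) trm \<Rightarrow> 'f gterm" where
  "ginst e (Var x) = e x"
| "ginst e (Fn f ts) = GFn f (map (ginst e) ts)"

text \<open>Contrajoin evaluation (v \<triangle> w)(phi e) of the ground instance of phi under the
  ground substitution e (e matters only on the free variables of phi).\<close>
fun cj_eval :: "'b bilat \<Rightarrow> ('p, 'f, 'b) valuation \<Rightarrow> ('p, 'f, 'b) valuation
      \<Rightarrow> ('v \<Rightarrow> 'f gterm) \<Rightarrow> ('p, 'f, 'v, 'b) fml \<Rightarrow> 'b" where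
  "cj_eval B v w e (Pos p ts) = v (p, map (ginst e) ts)"
| "cj_eval B v w e (Neg p ts) = bneg B (w (p, map (ginst e) ts))"
| "cj_eval B v w e (Equal s t) = (if ginst e s = ginst e t then bT B else bF B)"
| "cj_eval B v w e (NEqual s t) = bneg B (if ginst e s = ginst e t then bT B else bF B)"
| "cj_eval B v w e (Cst b) = b"
| "cj_eval B v w e (Conj a b) = tmeet B (cj_eval B v w e a) (cj_eval B v w e b)"
| "cj_eval B v w e (Disj a b) = tjoin B (cj_eval B v w e a) (cj_eval B v w e b)"
| "cj_eval B v w e (KMeet a b) = kmeet B (cj_eval B v w e a) (cj_eval B v w e b)"
| "cj_eval B v w e (KJoin a b) = kjoin B (cj_eval B v w e a) (cj_eval B v w e b)"
| "cj_eval B v w e (Ex x a) = tJoin B {cj_eval B v w (e(x := t)) a | t. True}"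
| "cj_eval B v w e (All x a) = tMeet B {cj_eval B v w (e(x := t)) a | t. True}"

datatype dflt = DF | DT | DU | DI

fun dval :: "'b bilat \<Rightarrow> dflt \<Rightarrow> 'b" where
  "dval B DF = bF B" | "dval B DT = bT B" | "dval B DU = bU B" | "dval B DI = bI B"

text \<open>A ground atom A heads a member of Inst-P iff A = p(e x1,...,e xn) for a clause
  (p,[x1..xn],phi) in P and a ground substitution e; the body of that ground
  instance is phi instantiated by e.\<close>
definition Psi :: "'b bilat \<Rightarrow> dflt \<Rightarrow> ('p, 'f, 'v, 'b) prog
      \<Rightarrow> ('p, 'f, 'b) valuation \<Rightarrow> ('p, 'f, 'b) valuation \<Rightarrow> ('p, 'f, 'b) valuation" where
  "Psi B \<alpha> P v w A =
     (if \<exists>(p, xs, \<phi>) \<in> P. \<exists>e. A = (p, map e xs)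
      then (THE b. \<exists>(p, xs, \<phi>) \<in> P. \<exists>e. A = (p, map e xs) \<and> b = cj_eval B v w e \<phi>)
      else dval B \<alpha>)"

definition least_fp :: "('a \<Rightarrow> 'a \<Rightarrow> bool) \<Rightarrow> ('a \<Rightarrow> 'a) \<Rightarrow> 'a" where
  "least_fp R f = (THE x. f x = x \<and> (\<forall>y. f y = y \<longrightarrow> R x y))"

definition greatest_fp :: "('a \<Rightarrow> 'a \<Rightarrow> bool) \<Rightarrow> ('a \<Rightarrow> 'a) \<Rightarrow> 'a" where
  "greatest_fp R f = (THE x. f x = x \<and> (\<forall>y. f y = y \<longrightarrow> R y x))"

fun Psi' :: "'b bilat \<Rightarrow> dflt \<Rightarrow> ('p, 'f, 'v, 'b) prog
      \<Rightarrow> ('p, 'f, 'b) valuation \<Rightarrow> ('p, 'f, 'b) valuation" where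
  "Psi' B DF P v = least_fp (vtle B) (\<lambda>x. Psi B DF P x v)"
| "Psi' B DT P v = greatest_fp (vtle B) (\<lambda>x. Psi B DT P x v)"
| "Psi' B DU P v = least_fp (vkle B) (\<lambda>x. Psi B DU P x v)"
| "Psi' B DI P v = greatest_fp (vkle B) (\<lambda>x. Psi B DI P x v)"

definition FixU :: "'b bilat \<Rightarrow> dflt \<Rightarrow> ('p, 'f, 'v, 'b) prog \<Rightarrow> ('p, 'f, 'b) valuation" where
  "FixU B \<alpha> P = least_fp (vkle B) (Psi' B \<alpha> P)"

end

theory Submission
  imports Defs
begin

text \<open>Each \<open>\<Psi>'\<^sup>\<alpha>(v)\<close> is the least fixpoint of \<open>\<Psi>\<^sup>\<alpha>(\<cdot>, v)\<close> for one of the orders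
  \<open>\<le>\<^sub>t\<close>, \<open>\<ge>\<^sub>t\<close>, \<open>\<le>\<^sub>k\<close>, \<open>\<ge>\<^sub>k\<close>, whose suprema are among the four infinitary bilattice operations.
  By interlacing all four operations, and hence the contrajoin evaluation of formulas, are
  \<open>\<le>\<^sub>k\<close>-monotone, and \<open>\<le>\<^sub>k\<close>-relatedness of two maps is inherited by their least fixpoints;
  so every \<open>\<Psi>'\<^sup>\<alpha>\<close> is \<open>\<le>\<^sub>k\<close>-monotone.
  As \<open>U\<close> is \<open>\<le>\<^sub>k\<close>-least, \<open>\<Psi>\<^sup>U(y, v) \<le>\<^sub>k \<Psi>\<^sup>\<alpha>(y, v) = y\<close> for \<open>y = \<Psi>'\<^sup>\<alpha>(v)\<close>, whence
  \<open>\<Psi>'\<^sup>U(v) \<le>\<^sub>k \<Psi>'\<^sup>\<alpha>(v)\<close>. The same step one level up, applied to \<open>y = Fix\<^sup>\<alpha>\<^sub>U\<close>, gives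
  \<open>Fix\<^sup>U\<^sub>U \<le>\<^sub>k Fix\<^sup>\<alpha>\<^sub>U\<close> for every default value \<open>\<alpha>\<close>.\<close>

section \<open>Complete orders given as relations\<close>

locale complete_order_rel =
  fixes R :: "'a \<Rightarrow> 'a \<Rightarrow> bool"
  assumes partial_order: "partial_order_rel R" and complete: "complete_rel R"
begin

lemma refl: "R x x"
  using partial_order by (simp add: partial_order_rel_def)

lemma antisym: "R x y \<Longrightarrow> R y x \<Longrightarrow> x = y"
  using partial_order by (simp add: partial_order_rel_def)

lemma trans: "R x y \<Longrightarrow> R y z \<Longrightarrow> R x z"
  using partial_order unfolding partial_order_rel_def by blast

lemma lub_eq: "is_lub R S x \<Longrightarrow> lub R S = x"
  unfolding lub_def by (rule the_equality) (auto simp: is_lub_def intro: antisym)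

lemma is_lub_lub: "is_lub R S (lub R S)"
  using complete lub_eq unfolding complete_rel_def by metis

lemma lub_upper: "a \<in> S \<Longrightarrow> R a (lub R S)"
  using is_lub_lub by (simp add: is_lub_def)

lemma lub_least: "(\<And>a. a \<in> S \<Longrightarrow> R a y) \<Longrightarrow> R (lub R S) y"
  using is_lub_lub by (simp add: is_lub_def)

lemma lub_mono: "rel_fun (rel_set R) R (lub R) (lub R)"
proof (intro rel_funI lub_least)
  fix S T a assume "rel_set R S T" and "a \<in> S"
  then obtain b where "b \<in> T" and "R a b" by (auto dest: rel_setD1)
  then show "R a (lub R T)" by (blast intro: trans lub_upper)
qed

text \<open>The meet of all prefixpoints is the least fixpoint.\<close>
lemma knaster_tarski:
  assumes mono: "monotone R R f"
  shows least_fp_fixpoint: "f (least_fp R f) = least_fp R f"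
    and least_fp_lowerbound: "R (f y) y \<Longrightarrow> R (least_fp R f) y"
proof -
  obtain a where a: "is_glb R {y. R (f y) y} a"
    using complete unfolding complete_rel_def by blast
  have "R (f a) y" if "R (f y) y" for y
    using a that monotoneD[OF mono] unfolding is_glb_def by (blast intro: trans)
  then have "R (f a) a"
    using a unfolding is_glb_def by blast
  moreover have "R a (f a)"
    using a calculation monotoneD[OF mono] unfolding is_glb_def by blast
  ultimately have fixed: "f a = a"
    by (rule antisym)
  have least: "R a y" if "R (f y) y" for y
    using a that unfolding is_glb_def by blast
  have "least_fp R f = a"
    unfolding least_fp_def using fixed least refl antisym by (intro the_equality) metis+
  with fixed least show "f (least_fp R f) = least_fp R f" and "R (f y) y \<Longrightarrow> R (least_fp R f) y"
    by simp_all
qed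

text \<open>The pairs below \<open>(a, b)\<close> related by \<open>K\<close> are closed under \<open>(f, g)\<close> and under
  componentwise suprema, so their supremum is a prefixpoint of both maps and hence equals
  \<open>(a, b)\<close>; this replaces the transfinite induction along the fixpoint iteration.\<close>
lemma least_fp_parametric:
  assumes mono_f: "monotone R R f" and mono_g: "monotone R R g"
    and lub_K: "rel_fun (rel_set K) K (lub R) (lub R)" and fg: "rel_fun K K f g"
  shows "K (least_fp R f) (least_fp R g)"
proof -
  define a b where "a = least_fp R f" and "b = least_fp R g"
  define Q where "Q = {(x, y). R x a \<and> R y b \<and> K x y}"
  define x y where "x = lub R (fst ` Q)" and "y = lub R (snd ` Q)"
  have "rel_set K (fst ` Q) (snd ` Q)"
    unfolding Q_def rel_set_def by force
  then have "K x y"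
    unfolding x_def y_def by (rule rel_funD[OF lub_K])
  moreover have "R x a" and "R y b"
    unfolding x_def y_def Q_def by (auto intro: lub_least)
  moreover have "f a = a" and "g b = b"
    unfolding a_def b_def
    by (rule least_fp_fixpoint[OF mono_f], rule least_fp_fixpoint[OF mono_g])
  ultimately have "(f x, g y) \<in> Q"
    using monotoneD[OF mono_f, of x a] monotoneD[OF mono_g, of y b] rel_funD[OF fg, of x y]
    unfolding Q_def by simp
  then have "R (f x) x" and "R (g y) y"
    unfolding x_def y_def by (force intro: lub_upper)+
  then have "R a x" and "R b y"
    unfolding a_def b_def
    by (auto intro: least_fp_lowerbound[OF mono_f] least_fp_lowerbound[OF mono_g])
  with \<open>R x a\<close> \<open>R y b\<close> \<open>K x y\<close> show ?thesis
    unfolding a_def b_def by (metis antisym)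
qed

lemma is_lub_pointwise: "is_lub (rel_fun (=) R) S (\<lambda>A. lub R ((\<lambda>v. v A) ` S))"
  unfolding is_lub_def rel_fun_def by (auto intro: lub_upper lub_least)

end

lemma is_lub_conversep [simp]: "is_lub R\<inverse>\<inverse> = is_glb R"
  by (simp add: fun_eq_iff is_lub_def is_glb_def)

lemma is_glb_conversep [simp]: "is_glb R\<inverse>\<inverse> = is_lub R"
  by (simp add: fun_eq_iff is_lub_def is_glb_def)

lemma glb_eq_lub_conversep: "glb R = lub R\<inverse>\<inverse>"
  by (simp add: fun_eq_iff glb_def lub_def)

lemma complete_order_rel_conversep:
  assumes "complete_order_rel R" shows "complete_order_rel R\<inverse>\<inverse>"
proof -
  interpret complete_order_rel R by fact
  have "partial_order_rel R\<inverse>\<inverse>"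
    unfolding partial_order_rel_def by (blast intro: refl antisym trans)
  moreover have "complete_rel R\<inverse>\<inverse>"
    using complete unfolding complete_rel_def by simp
  ultimately show ?thesis
    by unfold_locales
qed

lemma rel_set_op_conversep:
  "rel_fun (rel_set R\<inverse>\<inverse>) R\<inverse>\<inverse> Op Op \<longleftrightarrow> rel_fun (rel_set R) R Op Op"
  by (auto simp: rel_fun_def)

context complete_order_rel
begin

lemma glb_lower: "a \<in> S \<Longrightarrow> R (glb R S) a"
proof -
  interpret conv: complete_order_rel "R\<inverse>\<inverse>"
    by (rule complete_order_rel_conversep) unfold_locales
  show "a \<in> S \<Longrightarrow> R (glb R S) a"
    using conv.lub_upper by (simp add: glb_eq_lub_conversep)
qed

lemma glb_mono: "rel_fun (rel_set R) R (glb R) (glb R)"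
proof -
  interpret conv: complete_order_rel "R\<inverse>\<inverse>"
    by (rule complete_order_rel_conversep) unfold_locales
  show ?thesis
    using conv.lub_mono unfolding glb_eq_lub_conversep rel_set_op_conversep .
qed

end

lemma complete_order_rel_pointwise:
  assumes "complete_order_rel R" shows "complete_order_rel (rel_fun (=) R)"
proof -
  interpret complete_order_rel R by fact
  interpret conv: complete_order_rel "R\<inverse>\<inverse>"
    by (rule complete_order_rel_conversep) fact
  have "partial_order_rel (rel_fun (=) R)"
    unfolding partial_order_rel_def rel_fun_def
    by (intro conjI allI impI ext) (auto intro: refl antisym trans)
  moreover have "is_glb (rel_fun (=) R) S (\<lambda>A. lub R\<inverse>\<inverse> ((\<lambda>v. v A) ` S))" for S
    using conv.is_lub_pointwise[of S] unfolding is_lub_def is_glb_def rel_fun_def by simp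
  then have "complete_rel (rel_fun (=) R)"
    using is_lub_pointwise unfolding complete_rel_def by blast
  ultimately show ?thesis
    by unfold_locales
qed

lemma lub_pointwise:
  assumes "complete_order_rel R"
  shows "lub (rel_fun (=) R) S = (\<lambda>A. lub R ((\<lambda>v. v A) ` S))"
  using complete_order_rel.lub_eq[OF complete_order_rel_pointwise[OF assms]]
    complete_order_rel.is_lub_pointwise[OF assms] by blast

lemma lub_pointwise_parametric:
  assumes "complete_order_rel R" and lub_K: "rel_fun (rel_set K) K (lub R) (lub R)"
  shows "rel_fun (rel_set (rel_fun (=) K)) (rel_fun (=) K)
           (lub (rel_fun (=) R)) (lub (rel_fun (=) R))"
proof (rule rel_funI)
  fix S T assume ST: "rel_set (rel_fun (=) K) S T"
  have "rel_set K ((\<lambda>v. v A) ` S) ((\<lambda>v. v A) ` T)" for A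
  proof (rule rel_setI)
    fix a assume "a \<in> (\<lambda>v. v A) ` S"
    then obtain v w where "a = v A" and "w \<in> T" and "rel_fun (=) K v w"
      using ST by (auto dest: rel_setD1)
    then show "\<exists>b \<in> (\<lambda>v. v A) ` T. K a b"
      by (auto dest: rel_funD)
  next
    fix b assume "b \<in> (\<lambda>v. v A) ` T"
    then obtain v w where "b = w A" and "v \<in> S" and "rel_fun (=) K v w"
      using ST by (auto dest: rel_setD2)
    then show "\<exists>a \<in> (\<lambda>v. v A) ` S. K a b"
      by (auto dest: rel_funD)
  qed
  then show "rel_fun (=) K (lub (rel_fun (=) R) S) (lub (rel_fun (=) R) T)"
    unfolding lub_pointwise[OF assms(1)] by (auto intro: rel_funD[OF lub_K])
qed

lemma rel_set_op_pair:
  "rel_fun (rel_set R) R Op Op \<Longrightarrow> R a a' \<Longrightarrow> R b b' \<Longrightarrow> R (Op {a, b}) (Op {a', b'})"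
  by (erule rel_funD) (auto simp: rel_set_def)

lemma rel_set_op_range:
  "rel_fun (rel_set R) R Op Op \<Longrightarrow> (\<And>t. R (f t) (g t)) \<Longrightarrow> R (Op (range f)) (Op (range g))"
  by (erule rel_funD) (auto simp: rel_set_def)

lemma rel_set_obtain_pairs:
  assumes "rel_set K A C"
  obtains S where "\<forall>(a, c) \<in> S. K a c" and "fst ` S = A" and "snd ` S = C"
proof
  let ?S = "{(a, c). a \<in> A \<and> c \<in> C \<and> K a c}"
  show "\<forall>(a, c) \<in> ?S. K a c" by blast
  show "fst ` ?S = A"
    using rel_setD1[OF assms] by (auto simp: image_iff) blast
  show "snd ` ?S = C"
    using rel_setD2[OF assms] by (auto simp: image_iff) blast
qed

section \<open>Monotonicity of evaluation in a bilattice\<close>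

lemma bilattice_complete_order_rel:
  assumes "bilattice B"
  shows "complete_order_rel (tle B)" and "complete_order_rel (kle B)"
  using assms unfolding bilattice_def by (simp_all add: complete_order_rel_def)

lemma inf_interlaced_rel_set:
  assumes "inf_interlaced B"
  shows "rel_fun (rel_set (kle B)) (kle B) (tMeet B) (tMeet B)"
    and "rel_fun (rel_set (kle B)) (kle B) (tJoin B) (tJoin B)"
    and "rel_fun (rel_set (tle B)) (tle B) (kMeet B) (kMeet B)"
    and "rel_fun (rel_set (tle B)) (tle B) (kJoin B) (kJoin B)"
  using assms unfolding inf_interlaced_def
  by (auto intro!: rel_funI elim!: rel_set_obtain_pairs)

definition infinitary_ops_mono :: "('b \<Rightarrow> 'b \<Rightarrow> bool) \<Rightarrow> 'b bilat \<Rightarrow> bool" where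
  "infinitary_ops_mono R B \<longleftrightarrow>
     (\<forall>Op \<in> {tJoin B, tMeet B, kJoin B, kMeet B}. rel_fun (rel_set R) R Op Op)"

lemma infinitary_ops_mono_conversep:
  "infinitary_ops_mono R\<inverse>\<inverse> B \<longleftrightarrow> infinitary_ops_mono R B"
  unfolding infinitary_ops_mono_def rel_set_op_conversep ..

lemma infinitary_ops_mono_tle:
  assumes "bilattice B" shows "infinitary_ops_mono (tle B) B"
proof -
  interpret complete_order_rel "tle B"
    using assms by (rule bilattice_complete_order_rel)
  have "inf_interlaced B"
    using assms by (simp add: bilattice_def)
  then show ?thesis
    using lub_mono glb_mono inf_interlaced_rel_set[of B]
    unfolding infinitary_ops_mono_def tJoin_def[abs_def] tMeet_def[abs_def] by blast
qed

lemma infinitary_ops_mono_kle: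
  assumes "bilattice B" shows "infinitary_ops_mono (kle B) B"
proof -
  interpret complete_order_rel "kle B"
    using assms by (rule bilattice_complete_order_rel)
  have "inf_interlaced B"
    using assms by (simp add: bilattice_def)
  then show ?thesis
    using lub_mono glb_mono inf_interlaced_rel_set[of B]
    unfolding infinitary_ops_mono_def kJoin_def[abs_def] kMeet_def[abs_def] by blast
qed

lemma bU_least: "bilattice B \<Longrightarrow> kle B (bU B) a"
  unfolding bU_def kMeet_def
  by (rule complete_order_rel.glb_lower[OF bilattice_complete_order_rel(2)]) simp_all

lemma cj_eval_rel:
  assumes ops: "infinitary_ops_mono R B" and "reflp R"
    and v: "rel_fun (=) R v v'" and w: "rel_fun (=) R (bneg B \<circ> w) (bneg B \<circ> w')"
  shows "R (cj_eval B v w e \<phi>) (cj_eval B v' w' e \<phi>)"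
proof -
  have tJoin: "rel_fun (rel_set R) R (tJoin B) (tJoin B)"
    and tMeet: "rel_fun (rel_set R) R (tMeet B) (tMeet B)"
    and kJoin: "rel_fun (rel_set R) R (kJoin B) (kJoin B)"
    and kMeet: "rel_fun (rel_set R) R (kMeet B) (kMeet B)"
    using ops unfolding infinitary_ops_mono_def by simp_all
  show ?thesis
  proof (induction \<phi> arbitrary: e)
    case (Pos p ts)
    show ?case using v by (simp add: rel_fun_def)
  next
    case (Neg p ts)
    show ?case using w by (simp add: rel_fun_def)
  next
    case (Conj \<phi> \<psi>)
    then show ?case by (simp add: tmeet_def rel_set_op_pair[OF tMeet])
  next
    case (Disj \<phi> \<psi>)
    then show ?case by (simp add: tjoin_def rel_set_op_pair[OF tJoin])
  next
    case (KMeet \<phi> \<psi>)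
    then show ?case by (simp add: kmeet_def rel_set_op_pair[OF kMeet])
  next
    case (KJoin \<phi> \<psi>)
    then show ?case by (simp add: kjoin_def rel_set_op_pair[OF kJoin])
  next
    case (Ex x \<phi>)
    then show ?case by (simp add: full_SetCompr_eq rel_set_op_range[OF tJoin])
  next
    case (All x \<phi>)
    then show ?case by (simp add: full_SetCompr_eq rel_set_op_range[OF tMeet])
  qed (use \<open>reflp R\<close> in \<open>simp_all add: reflpD\<close>)
qed

lemma ginst_cong: "(\<And>x. x \<in> tvars t \<Longrightarrow> e x = e' x) \<Longrightarrow> ginst e t = ginst e' t"
  by (induction t) auto

lemma cj_eval_cong:
  "(\<And>x. x \<in> fv \<phi> \<Longrightarrow> e x = e' x) \<Longrightarrow> cj_eval B v w e \<phi> = cj_eval B v w e' \<phi>"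
proof (induction \<phi> arbitrary: e e')
  case (Pos p ts)
  then have "map (ginst e) ts = map (ginst e') ts"
    by (intro map_cong refl ginst_cong) auto
  then show ?case by (simp only: cj_eval.simps)
next
  case (Neg p ts)
  then have "map (ginst e) ts = map (ginst e') ts"
    by (intro map_cong refl ginst_cong) auto
  then show ?case by (simp only: cj_eval.simps)
next
  case (Ex x \<phi>)
  have "cj_eval B v w (e(x := t)) \<phi> = cj_eval B v w (e'(x := t)) \<phi>" for t
    using Ex.prems by (intro Ex.IH) auto
  then show ?case by simp
next
  case (All x \<phi>)
  have "cj_eval B v w (e(x := t)) \<phi> = cj_eval B v w (e'(x := t)) \<phi>" for t
    using All.prems by (intro All.IH) auto
  then show ?case by simp
next
  case (Conj \<phi> \<psi>)
  show ?case using Conj.IH[of e e'] Conj.prems by simp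
next
  case (Disj \<phi> \<psi>)
  show ?case using Disj.IH[of e e'] Disj.prems by simp
next
  case (KMeet \<phi> \<psi>)
  show ?case using KMeet.IH[of e e'] KMeet.prems by simp
next
  case (KJoin \<phi> \<psi>)
  show ?case using KJoin.IH[of e e'] KJoin.prems by simp
next
  case (Equal s t)
  then show ?case using ginst_cong[of s e e'] ginst_cong[of t e e'] by simp
next
  case (NEqual s t)
  then show ?case using ginst_cong[of s e e'] ginst_cong[of t e e'] by simp
qed simp

lemma Psi_clause_instance:
  assumes P: "fitting_program P" and c: "(p, xs, \<phi>) \<in> P"
  shows "Psi B \<alpha> P v w (p, map e xs) = cj_eval B v w e \<phi>"
proof -
  have "b = cj_eval B v w e \<phi>"
    if "(p', xs', \<phi>') \<in> P" and "(p, map e xs) = (p', map e' xs')" and "b = cj_eval B v w e' \<phi>'"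
    for b p' xs' \<phi>' e'
  proof -
    have "(p', xs', \<phi>') = (p, xs, \<phi>)"
      using P c that(1,2) unfolding fitting_program_def by fastforce
    moreover have "fv \<phi> \<subseteq> set xs"
      using P c unfolding fitting_program_def by fastforce
    ultimately show ?thesis
      using that(2,3) by (auto simp: map_eq_conv intro!: cj_eval_cong)
  qed
  then have "(THE b. \<exists>(p', xs', \<phi>') \<in> P. \<exists>e'. (p, map e xs) = (p', map e' xs')
               \<and> b = cj_eval B v w e' \<phi>') = cj_eval B v w e \<phi>"
    using c by (intro the_equality) blast+
  then show ?thesis
    using c unfolding Psi_def by auto
qed

lemma Psi_rel:
  assumes P: "fitting_program P" and ops: "infinitary_ops_mono R B" and "reflp R"
    and v: "rel_fun (=) R v v'" and w: "rel_fun (=) R (bneg B \<circ> w) (bneg B \<circ> w')"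
    and \<alpha>: "R (dval B \<alpha>) (dval B \<alpha>')"
  shows "rel_fun (=) R (Psi B \<alpha> P v w) (Psi B \<alpha>' P v' w')"
proof (rule rel_funI, hypsubst)
  fix A
  show "R (Psi B \<alpha> P v w A) (Psi B \<alpha>' P v' w' A)"
  proof (cases "\<exists>(p, xs, \<phi>) \<in> P. \<exists>e. A = (p, map e xs)")
    case True
    then obtain p xs \<phi> e where "(p, xs, \<phi>) \<in> P" and "A = (p, map e xs)"
      by blast
    then show ?thesis
      using cj_eval_rel[OF ops \<open>reflp R\<close> v w] by (simp add: Psi_clause_instance[OF P])
  next
    case False
    then show ?thesis
      using \<alpha> unfolding Psi_def by simp
  qed
qed

section \<open>The operators \<open>\<Psi>\<close> and \<open>\<Psi>'\<close>\<close>

lemma vtle_eq: "vtle B = rel_fun (=) (tle B)"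
  by (simp add: fun_eq_iff vtle_def rel_fun_def)

lemma vkle_eq: "vkle B = rel_fun (=) (kle B)"
  by (simp add: fun_eq_iff vkle_def rel_fun_def)

lemma greatest_fp_eq_least_fp_conversep: "greatest_fp R f = least_fp R\<inverse>\<inverse> f"
  by (simp add: greatest_fp_def least_fp_def)

lemma rel_fun_eq_conversep: "rel_fun (=) R\<inverse>\<inverse> = (rel_fun (=) R)\<inverse>\<inverse>"
  by (auto simp: fun_eq_iff rel_fun_def)

text \<open>The order for which \<open>\<Psi>'\<^sup>\<alpha>(v)\<close> is a least fixpoint; a greatest fixpoint is a least
  fixpoint for the converse order.\<close>
fun fp_order :: "'b bilat \<Rightarrow> dflt \<Rightarrow> 'b \<Rightarrow> 'b \<Rightarrow> bool" where
  "fp_order B DF = tle B"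
| "fp_order B DT = (tle B)\<inverse>\<inverse>"
| "fp_order B DU = kle B"
| "fp_order B DI = (kle B)\<inverse>\<inverse>"

lemma Psi'_eq_least_fp:
  "Psi' B \<alpha> P v = least_fp (rel_fun (=) (fp_order B \<alpha>)) (\<lambda>x. Psi B \<alpha> P x v)"
  by (cases \<alpha>) (simp_all add: vtle_eq vkle_eq greatest_fp_eq_least_fp_conversep rel_fun_eq_conversep)

lemma fp_order_complete: "bilattice B \<Longrightarrow> complete_order_rel (fp_order B \<alpha>)"
  by (cases \<alpha>) (simp_all add: bilattice_complete_order_rel complete_order_rel_conversep)

lemma fp_order_ops_mono: "bilattice B \<Longrightarrow> infinitary_ops_mono (fp_order B \<alpha>) B"
  by (cases \<alpha>)
    (simp_all add: infinitary_ops_mono_tle infinitary_ops_mono_kle infinitary_ops_mono_conversep)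

lemma lub_fp_order: "lub (fp_order B \<alpha>) \<in> {tJoin B, tMeet B, kJoin B, kMeet B}"
  by (cases \<alpha>) (simp_all add: fun_eq_iff tJoin_def tMeet_def kJoin_def kMeet_def glb_eq_lub_conversep)

lemma lub_fp_order_kle_mono:
  "bilattice B \<Longrightarrow> rel_fun (rel_set (kle B)) (kle B) (lub (fp_order B \<alpha>)) (lub (fp_order B \<alpha>))"
  using lub_fp_order infinitary_ops_mono_kle unfolding infinitary_ops_mono_def by blast

context
  fixes B :: "'b bilat" and P :: "('p, 'f, 'v, 'b) prog"
  assumes B: "bilattice B" and P: "fitting_program P"
begin

lemma kle_refl: "kle B a a"
  by (rule complete_order_rel.refl[OF bilattice_complete_order_rel(2)[OF B]])

lemma Psi_monotone:
  "monotone (rel_fun (=) (fp_order B \<alpha>)) (rel_fun (=) (fp_order B \<alpha>)) (\<lambda>x. Psi B \<alpha> P x v)"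
proof -
  interpret complete_order_rel "fp_order B \<alpha>"
    using B by (rule fp_order_complete)
  show ?thesis
    by (intro monotoneI Psi_rel[OF P fp_order_ops_mono[OF B]])
      (simp_all add: reflpI refl rel_fun_def)
qed

lemma Psi_kle_rel:
  assumes "rel_fun (=) (kle B) x y" and "rel_fun (=) (kle B) v w"
    and "kle B (dval B \<alpha>) (dval B \<alpha>')"
  shows "rel_fun (=) (kle B) (Psi B \<alpha> P x v) (Psi B \<alpha>' P y w)"
proof (rule Psi_rel[OF P infinitary_ops_mono_kle[OF B] _ assms(1) _ assms(3)])
  interpret complete_order_rel "kle B"
    using B by (rule bilattice_complete_order_rel)
  show "reflp (kle B)"
    by (simp add: reflpI refl)
  show "rel_fun (=) (kle B) (bneg B \<circ> v) (bneg B \<circ> w)"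
    using assms(2) B unfolding bilattice_def is_negation_def rel_fun_def by simp
qed

lemma Psi'_fixpoint: "Psi B \<alpha> P (Psi' B \<alpha> P v) v = Psi' B \<alpha> P v"
  unfolding Psi'_eq_least_fp
  by (rule complete_order_rel.least_fp_fixpoint[OF
        complete_order_rel_pointwise[OF fp_order_complete[OF B]] Psi_monotone])

lemma Psi'_kle_mono: "monotone (rel_fun (=) (kle B)) (rel_fun (=) (kle B)) (Psi' B \<alpha> P)"
proof (rule monotoneI)
  fix v w :: "('p, 'f, 'b) valuation" assume "rel_fun (=) (kle B) v w"
  then have "rel_fun (=) (kle B) (Psi B \<alpha> P x v) (Psi B \<alpha> P y w)"
    if "rel_fun (=) (kle B) x y" for x y
    using that by (intro Psi_kle_rel kle_refl)
  then have "rel_fun (rel_fun (=) (kle B)) (rel_fun (=) (kle B))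
      (\<lambda>x. Psi B \<alpha> P x v) (\<lambda>x. Psi B \<alpha> P x w)"
    by (blast intro: rel_funI[of "rel_fun (=) (kle B)" "rel_fun (=) (kle B)"])
  then show "rel_fun (=) (kle B) (Psi' B \<alpha> P v) (Psi' B \<alpha> P w)"
    unfolding Psi'_eq_least_fp
    by (intro complete_order_rel.least_fp_parametric[OF
          complete_order_rel_pointwise[OF fp_order_complete[OF B]] Psi_monotone Psi_monotone
          lub_pointwise_parametric[OF fp_order_complete[OF B] lub_fp_order_kle_mono[OF B]]])
qed

lemma Psi'_DU_below: "rel_fun (=) (kle B) (Psi' B DU P v) (Psi' B \<alpha> P v)"
proof -
  interpret K: complete_order_rel "rel_fun (=) (kle B)"
    using B by (intro complete_order_rel_pointwise bilattice_complete_order_rel)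
  have "rel_fun (=) (kle B) (Psi B DU P (Psi' B \<alpha> P v) v) (Psi B \<alpha> P (Psi' B \<alpha> P v) v)"
    using B by (intro Psi_kle_rel K.refl) (simp add: bU_least)
  then show ?thesis
    unfolding Psi'_fixpoint Psi'_eq_least_fp[of B DU]
    using K.least_fp_lowerbound[OF Psi_monotone[of DU, simplified]] by simp
qed

lemma FixU_DU_below: "vkle B (FixU B DU P) (FixU B \<alpha> P)"
proof -
  interpret K: complete_order_rel "rel_fun (=) (kle B)"
    using B by (intro complete_order_rel_pointwise bilattice_complete_order_rel)
  have "rel_fun (=) (kle B) (Psi' B DU P (FixU B \<alpha> P)) (FixU B \<alpha> P)"
    using Psi'_DU_below K.least_fp_fixpoint[OF Psi'_kle_mono]
    unfolding FixU_def vkle_eq by metis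
  then show ?thesis
    unfolding FixU_def vkle_eq by (rule K.least_fp_lowerbound[OF Psi'_kle_mono])
qed

end

theorem theorem5:
  fixes B :: "'b bilat" and P :: "('p, 'f, 'v, 'b) prog"
  assumes "bilattice B" and "fitting_program P"
  shows "vkle B (FixU B DU P) (FixU B DF P) \<and> vkle B (FixU B DU P) (FixU B DT P)"
  using FixU_DU_below[OF assms] by blast

end
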